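(* Let $f$ be a real function on $\mathbb{T}^\kappa$ and $g$ a real function on $\mathbb{T}$. Fix $0<\alpha\le1$ and put $\gamma=1-\alpha$. Then $$\int_a^b f(t)\,({}_a\Delta_h^{\alpha}g)(t)\,\Delta t=h^\gamma f(\rho(b))g(b)-h^\gamma f(a)g(a)+\int_a^{\rho(b)}({}_h\Delta_{\rho(b)}^{\alpha}f)(t)\,g(\sigma(t))\,\Delta t$$ $$\quad+\frac{\gamma}{\Gamma(\gamma+1)}g(a)\Bigl(\int_a^b(t+\gamma h-a)_h^{(\gamma-1)}f(t)\Delta t-\int_{\sigma(a)}^{b}(t+\gamma h-\sigma(a))_h^{(\gamma-1)}f(t)\Delta t\Bigr).$$
   Context: Let $a\in\mathbb{R}$, $h>0$, $b=a+kh$ with $k\in\mathbb{N}$, $k\ge2$, $\mathbb{T}=\{a,a+h,\dots,b\}$, $\mathbb{T}^\kappa=\mathbb{T}\setminus\{b\}$, $\sigma(t)=t+h$, $\rho(t)=t-h$, $G^\Delta(t)=(G(t+h)-G(t))/h$. For $c\le d$, $\int_c^dG(s)\Delta s:=h\sum_{j=0}^{(d-c)/h-1}G(c+jh)$. $h$-factorial: $x_h^{(y)}:=h^y\Gamma(\frac{x}{h}+1)/\Gamma(\frac{x}{h}+1-y)$ (division at a pole yields zero). For $\nu\ge0$, $c\in\mathbb{T}$, $G$ defined on $\{s\in\mathbb{T}:s\le c\}$ and $t\in\mathbb{T}$, $t\le c$: $({}_a\Delta_h^{-\nu}G)(t+\nu h):=h^\nu G(t)+\frac{\nu}{\Gamma(\nu+1)}\int_a^t(t+\nu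 h-\sigma(s))_h^{(\nu-1)}G(s)\Delta s$, $({}_h\Delta_c^{-\nu}G)(t-\nu h):=h^\nu G(t)+\frac{\nu}{\Gamma(\nu+1)}\int_{\sigma(t)}^{\sigma(c)}(s+\nu h-\sigma(t))_h^{(\nu-1)}G(s)\Delta s$. For $0<\alpha\le1$, $\gamma=1-\alpha$, $t\in\mathbb{T}$, $t<c$: left fractional difference $({}_a\Delta_h^{\alpha}G)(t):=[\tau\mapsto({}_a\Delta_h^{-\gamma}G)(\tau+\gamma h)]^\Delta(t)$; right fractional difference with endpoint $c$: $({}_h\Delta_c^{\alpha}G)(t):=-[\tau\mapsto({}_h\Delta_c^{-\gamma}G)(\tau-\gamma h)]^\Delta(t)$. *)

theory Defs
  imports "HOL-Analysis.Analysis"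
begin

text \<open>Time scale T = {a, a+h, ..., b}; sigma t = t + h, rho t = t - h.
  Functions on T are modelled as total functions real => real; only their
  values on the relevant grid points are ever used.\<close>

definition dsigma :: "real \<Rightarrow> real \<Rightarrow> real" where
  "dsigma h t = t + h"

definition drho :: "real \<Rightarrow> real \<Rightarrow> real" where
  "drho h t = t - h"

definition delta_int :: "real \<Rightarrow> real \<Rightarrow> real \<Rightarrow> (real \<Rightarrow> real) \<Rightarrow> real" where
  "delta_int h c d G = h * (\<Sum>j<nat (round ((d - c) / h)). G (c + real j * h))"

definition delta_deriv :: "real \<Rightarrow> (real \<Rightarrow> real) \<Rightarrow> real \<Rightarrow> real" where
  "delta_deriv h G t = (G (t + h) - G t) / h"

text \<open>h-factorial x_h^(y) = h^y Gamma(x/h+1) / Gamma(x/h+1-y); division at a pole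
  of the denominator yields zero, which is exactly multiplication by rGamma.\<close>
definition hfact :: "real \<Rightarrow> real \<Rightarrow> real \<Rightarrow> real" where
  "hfact h x y = h powr y * Gamma (x / h + 1) * rGamma (x / h + 1 - y)"

text \<open>left_frac_sum a h nu G t = (a Delta_h^{-nu} G)(t + nu h).\<close>
definition left_frac_sum :: "real \<Rightarrow> real \<Rightarrow> real \<Rightarrow> (real \<Rightarrow> real) \<Rightarrow> real \<Rightarrow> real" where
  "left_frac_sum a h \<nu> G t = h powr \<nu> * G t
     + \<nu> / Gamma (\<nu> + 1) * delta_int h a t (\<lambda>s. hfact h (t + \<nu> * h - dsigma h s) (\<nu> - 1) * G s)"

text \<open>right_frac_sum c h nu G t = (h Delta_c^{-nu} G)(t - nu h).\<close>
definition right_frac_sum :: "real \<Rightarrow> real \<Rightarrow> real \<Rightarrow> (real \<Rightarrow> real) \<Rightarrow> real \<Rightarrow> real" where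
  "right_frac_sum c h \<nu> G t = h powr \<nu> * G t
     + \<nu> / Gamma (\<nu> + 1) * delta_int h (dsigma h t) (dsigma h c) (\<lambda>s. hfact h (s + \<nu> * h - dsigma h t) (\<nu> - 1) * G s)"

definition left_frac_diff :: "real \<Rightarrow> real \<Rightarrow> real \<Rightarrow> (real \<Rightarrow> real) \<Rightarrow> real \<Rightarrow> real" where
  "left_frac_diff a h \<alpha> G t = delta_deriv h (left_frac_sum a h (1 - \<alpha>) G) t"

definition right_frac_diff :: "real \<Rightarrow> real \<Rightarrow> real \<Rightarrow> (real \<Rightarrow> real) \<Rightarrow> real \<Rightarrow> real" where
  "right_frac_diff c h \<alpha> G t = - delta_deriv h (right_frac_sum c h (1 - \<alpha>) G) t"

end

theory Submission
  imports Defs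
begin

(* All objects in the theorem live on the grid a + j h, so the proof is a
   statement about finite sums.  Writing F j = f(a + j h), G j = g(a + j h)
   and W n = (n h + gamma h)_h^(gamma - 1) for the fractional weights, the
   fractional sums become
     left sum at a + j h  = h^gamma G j + C h (frac_conv W G j),
     right sum at a + j h = h^gamma F j + C h (frac_tail W F m j),
   with C = gamma / Gamma(gamma + 1): a discrete convolution over the past and
   its adjoint, a weighted sum over the future up to rho(b) = a + m h. *)

definition frac_conv :: "(nat \<Rightarrow> real) \<Rightarrow> (nat \<Rightarrow> real) \<Rightarrow> nat \<Rightarrow> real" where
  "frac_conv W G j = (\<Sum>i<j. W (j - i - 1) * G i)"

definition frac_tail :: "(nat \<Rightarrow> real) \<Rightarrow> (nat \<Rightarrow> real) \<Rightarrow> nat \<Rightarrow> nat \<Rightarrow> real" where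
  "frac_tail W F m j = (\<Sum>l<m - j. W l * F (Suc j + l))"

lemma frac_tail_self [simp]: "frac_tail W F m m = 0"
  by (simp add: frac_tail_def)

lemma frac_tail_Suc:
  assumes "j \<le> m"
  shows "frac_tail W F (Suc m) j = frac_tail W F m j + W (m - j) * F (Suc m)"
proof -
  have "Suc m - j = Suc (m - j)" using assms by simp
  then show ?thesis using assms by (simp add: frac_tail_def)
qed

lemma frac_conv_Suc:
  "frac_conv W G (Suc j) = W j * G 0 + frac_conv W (\<lambda>i. G (Suc i)) j"
  unfolding frac_conv_def by (subst sum.lessThan_Suc_shift) simp

(* Discrete Fubini: pairing F with the convolution of G equals pairing G with
   the tail sum of F. *)
lemma frac_conv_tail_duality:
  "(\<Sum>j<Suc m. F j * frac_conv W G j) = (\<Sum>i<m. G i * frac_tail W F m i)"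
proof (induction m)
  case 0
  then show ?case by (simp add: frac_conv_def)
next
  case (Suc m)
  have "(\<Sum>i<Suc m. G i * frac_tail W F (Suc m) i)
      = (\<Sum>i<Suc m. G i * frac_tail W F m i) + F (Suc m) * (\<Sum>i<Suc m. W (m - i) * G i)"
    by (simp add: frac_tail_Suc sum.distrib sum_distrib_left algebra_simps)
  also have "\<dots> = (\<Sum>j<Suc m. F j * frac_conv W G j) + F (Suc m) * frac_conv W G (Suc m)"
    unfolding Suc.IH by (simp add: frac_conv_def)
  finally show ?case by simp
qed

lemma frac_summation_by_parts:
  "(\<Sum>j<Suc m. F j * (frac_conv W G (Suc j) - frac_conv W G j))
   = G 0 * ((\<Sum>j<Suc m. W j * F j) - (\<Sum>j<m. W j * F (Suc j)))
     - (\<Sum>j<m. (frac_tail W F m (Suc j) - frac_tail W F m j) * G (Suc j))"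
proof -
  have shifted: "(\<Sum>j<Suc m. F j * frac_conv W G (Suc j))
      = G 0 * (\<Sum>j<Suc m. W j * F j) + (\<Sum>j<m. G (Suc j) * frac_tail W F m j)"
    unfolding frac_conv_Suc frac_conv_tail_duality[symmetric]
    by (simp add: sum.distrib sum_distrib_left algebra_simps)
  have tail0: "frac_tail W F m 0 = (\<Sum>j<m. W j * F (Suc j))"
    by (simp add: frac_tail_def)
  have unshifted: "(\<Sum>j<Suc m. F j * frac_conv W G j)
      = G 0 * (\<Sum>j<m. W j * F (Suc j)) + (\<Sum>j<m. G (Suc j) * frac_tail W F m (Suc j))"
  proof -
    have "(\<Sum>i<m. G i * frac_tail W F m i) = (\<Sum>i<Suc m. G i * frac_tail W F m i)"
      by simp
    also have "\<dots> = G 0 * frac_tail W F m 0 + (\<Sum>j<m. G (Suc j) * frac_tail W F m (Suc j))"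
      by (rule sum.lessThan_Suc_shift)
    finally show ?thesis by (simp only: frac_conv_tail_duality tail0)
  qed
  have "(\<Sum>j<Suc m. F j * (frac_conv W G (Suc j) - frac_conv W G j))
      = (\<Sum>j<Suc m. F j * frac_conv W G (Suc j)) - (\<Sum>j<Suc m. F j * frac_conv W G j)"
    by (simp only: right_diff_distrib sum_subtractf)
  also have "\<dots> = G 0 * ((\<Sum>j<Suc m. W j * F j) - (\<Sum>j<m. W j * F (Suc j)))
     - (\<Sum>j<m. (frac_tail W F m (Suc j) - frac_tail W F m j) * G (Suc j))"
    unfolding shifted unshifted
    by (simp add: left_diff_distrib sum_subtractf algebra_simps del: sum.lessThan_Suc)
  finally show ?thesis .
qed

lemma summation_by_parts:
  fixes F G :: "nat \<Rightarrow> 'a :: comm_ring"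
  shows "(\<Sum>j<Suc m. F j * (G (Suc j) - G j))
   = F m * G (Suc m) - F 0 * G 0 - (\<Sum>j<m. (F (Suc j) - F j) * G (Suc j))"
  by (induction m) (simp_all add: algebra_simps)

definition grid :: "real \<Rightarrow> real \<Rightarrow> (real \<Rightarrow> real) \<Rightarrow> nat \<Rightarrow> real" where
  "grid a h f j = f (a + real j * h)"

definition hweight :: "real \<Rightarrow> real \<Rightarrow> nat \<Rightarrow> real" where
  "hweight h \<nu> n = hfact h (real n * h + \<nu> * h) (\<nu> - 1)"

lemma grid_Suc: "grid a h f (Suc j) = f (a + real j * h + h)"
  by (simp add: grid_def algebra_simps)

lemma grid_shift: "grid (a + h) h f j = grid a h f (Suc j)"
  by (simp add: grid_def algebra_simps)

lemma grid_step: "a + real j * h + h = a + real (Suc j) * h"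
  by (simp add: algebra_simps)

lemma delta_int_grid:
  assumes "h > 0"
  shows "delta_int h c (c + real n * h) G = h * (\<Sum>j<n. G (c + real j * h))"
  using assms by (simp add: delta_int_def)

lemma left_frac_sum_grid:
  assumes "h > 0"
  shows "left_frac_sum a h \<nu> g (a + real j * h)
    = h powr \<nu> * grid a h g j + \<nu> / Gamma (\<nu> + 1) * (h * frac_conv (hweight h \<nu>) (grid a h g) j)"
proof -
  have "hfact h (a + real j * h + \<nu> * h - dsigma h (a + real i * h)) (\<nu> - 1) = hweight h \<nu> (j - i - 1)"
    if "i < j" for i
    using that by (simp add: hweight_def dsigma_def of_nat_diff algebra_simps)
  then have "delta_int h a (a + real j * h)
      (\<lambda>s. hfact h (a + real j * h + \<nu> * h - dsigma h s) (\<nu> - 1) * g s)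
    = h * frac_conv (hweight h \<nu>) (grid a h g) j"
    using assms by (simp add: delta_int_grid frac_conv_def grid_def)
  then show ?thesis by (simp add: left_frac_sum_def grid_def)
qed

lemma right_frac_sum_grid:
  assumes "h > 0" and "j \<le> m"
  shows "right_frac_sum (a + real m * h) h \<nu> f (a + real j * h)
    = h powr \<nu> * grid a h f j + \<nu> / Gamma (\<nu> + 1) * (h * frac_tail (hweight h \<nu>) (grid a h f) m j)"
proof -
  have ends: "dsigma h (a + real m * h) = dsigma h (a + real j * h) + real (m - j) * h"
    using assms(2) by (simp add: dsigma_def of_nat_diff algebra_simps)
  have "delta_int h (dsigma h (a + real j * h)) (dsigma h (a + real m * h))
      (\<lambda>s. hfact h (s + \<nu> * h - dsigma h (a + real j * h)) (\<nu> - 1) * f s)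
    = h * (\<Sum>l<m - j. hfact h (dsigma h (a + real j * h) + real l * h + \<nu> * h
             - dsigma h (a + real j * h)) (\<nu> - 1) * f (dsigma h (a + real j * h) + real l * h))"
    by (simp only: ends delta_int_grid[OF assms(1)])
  also have "\<dots> = h * frac_tail (hweight h \<nu>) (grid a h f) m j"
    by (simp add: frac_tail_def grid_def hweight_def dsigma_def algebra_simps)
  finally have "delta_int h (dsigma h (a + real j * h)) (dsigma h (a + real m * h))
      (\<lambda>s. hfact h (s + \<nu> * h - dsigma h (a + real j * h)) (\<nu> - 1) * f s)
    = h * frac_tail (hweight h \<nu>) (grid a h f) m j" .
  then show ?thesis by (simp add: right_frac_sum_def grid_def)
qed

lemma left_frac_diff_grid:
  assumes "h > 0" and "\<gamma> = 1 - \<alpha>"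
  shows "h * left_frac_diff a h \<alpha> g (a + real j * h)
    = h powr \<gamma> * (grid a h g (Suc j) - grid a h g j)
      + \<gamma> / Gamma (\<gamma> + 1) * h * (frac_conv (hweight h \<gamma>) (grid a h g) (Suc j)
                                  - frac_conv (hweight h \<gamma>) (grid a h g) j)"
proof -
  have cancel: "h * ((X - Y) / h) = X - Y" for X Y using assms(1) by simp
  show ?thesis
    unfolding left_frac_diff_def delta_deriv_def assms(2)[symmetric] grid_step
      left_frac_sum_grid[OF assms(1)] cancel
    by (simp add: algebra_simps)
qed

lemma right_frac_diff_grid:
  assumes "h > 0" and "\<gamma> = 1 - \<alpha>" and "j < m"
  shows "h * right_frac_diff (a + real m * h) h \<alpha> f (a + real j * h)
    = - (h powr \<gamma> * (grid a h f (Suc j) - grid a h f j)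
         + \<gamma> / Gamma (\<gamma> + 1) * h * (frac_tail (hweight h \<gamma>) (grid a h f) m (Suc j)
                                     - frac_tail (hweight h \<gamma>) (grid a h f) m j))"
proof -
  have "j \<le> m" "Suc j \<le> m" using assms(3) by simp_all
  have cancel: "h * - ((X - Y) / h) = - (X - Y)" for X Y using assms(1) by simp
  show ?thesis
    unfolding right_frac_diff_def delta_deriv_def assms(2)[symmetric] grid_step
      right_frac_sum_grid[OF assms(1) \<open>j \<le> m\<close>] right_frac_sum_grid[OF assms(1) \<open>Suc j \<le> m\<close>]
      cancel
    by (simp add: algebra_simps)
qed

lemma delta_int_left_frac_diff:
  assumes "h > 0" and "\<gamma> = 1 - \<alpha>"
  shows "delta_int h a (a + real n * h) (\<lambda>t. f t * left_frac_diff a h \<alpha> g t)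
    = h powr \<gamma> * (\<Sum>j<n. grid a h f j * (grid a h g (Suc j) - grid a h g j))
      + \<gamma> / Gamma (\<gamma> + 1) * h * (\<Sum>j<n. grid a h f j *
          (frac_conv (hweight h \<gamma>) (grid a h g) (Suc j) - frac_conv (hweight h \<gamma>) (grid a h g) j))"
proof -
  have "delta_int h a (a + real n * h) (\<lambda>t. f t * left_frac_diff a h \<alpha> g t)
      = (\<Sum>j<n. grid a h f j * (h * left_frac_diff a h \<alpha> g (a + real j * h)))"
    unfolding delta_int_grid[OF assms(1)] by (simp add: sum_distrib_left grid_def algebra_simps)
  also have "\<dots> = (\<Sum>j<n. h powr \<gamma> * (grid a h f j * (grid a h g (Suc j) - grid a h g j))
      + \<gamma> / Gamma (\<gamma> + 1) * h * (grid a h f j *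
          (frac_conv (hweight h \<gamma>) (grid a h g) (Suc j) - frac_conv (hweight h \<gamma>) (grid a h g) j)))"
    unfolding left_frac_diff_grid[OF assms] by (simp only: distrib_left mult.left_commute)
  finally show ?thesis
    by (simp only: sum.distrib sum_distrib_left)
qed

lemma delta_int_right_frac_diff:
  assumes "h > 0" and "\<gamma> = 1 - \<alpha>"
  shows "delta_int h a (a + real m * h)
      (\<lambda>t. right_frac_diff (a + real m * h) h \<alpha> f t * g (dsigma h t))
    = - (h powr \<gamma> * (\<Sum>j<m. (grid a h f (Suc j) - grid a h f j) * grid a h g (Suc j))
         + \<gamma> / Gamma (\<gamma> + 1) * h * (\<Sum>j<m. (frac_tail (hweight h \<gamma>) (grid a h f) m (Suc j)
                                     - frac_tail (hweight h \<gamma>) (grid a h f) m j) * grid a h g (Suc j)))"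
proof -
  have "delta_int h a (a + real m * h)
      (\<lambda>t. right_frac_diff (a + real m * h) h \<alpha> f t * g (dsigma h t))
    = (\<Sum>j<m. (h * right_frac_diff (a + real m * h) h \<alpha> f (a + real j * h)) * grid a h g (Suc j))"
    unfolding delta_int_grid[OF assms(1)]
    by (simp add: sum_distrib_left grid_Suc dsigma_def algebra_simps)
  also have "\<dots> = (\<Sum>j<m. - (h powr \<gamma> * ((grid a h f (Suc j) - grid a h f j) * grid a h g (Suc j))
         + \<gamma> / Gamma (\<gamma> + 1) * h * ((frac_tail (hweight h \<gamma>) (grid a h f) m (Suc j)
                - frac_tail (hweight h \<gamma>) (grid a h f) m j) * grid a h g (Suc j))))"
  proof (intro sum.cong refl)
    fix j assume "j \<in> {..<m}"
    then have "j < m" by simp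
    show "h * right_frac_diff (a + real m * h) h \<alpha> f (a + real j * h) * grid a h g (Suc j)
      = - (h powr \<gamma> * ((grid a h f (Suc j) - grid a h f j) * grid a h g (Suc j))
         + \<gamma> / Gamma (\<gamma> + 1) * h * ((frac_tail (hweight h \<gamma>) (grid a h f) m (Suc j)
                - frac_tail (hweight h \<gamma>) (grid a h f) m j) * grid a h g (Suc j)))"
      unfolding right_frac_diff_grid[OF assms \<open>j < m\<close>] by (simp add: algebra_simps)
  qed
  finally show ?thesis
    by (simp only: sum_negf sum.distrib sum_distrib_left)
qed

lemma delta_int_hweight:
  assumes "h > 0"
  shows "delta_int h c (c + real n * h) (\<lambda>t. hfact h (t + \<gamma> * h - c) (\<gamma> - 1) * f t)
    = h * (\<Sum>j<n. hweight h \<gamma> j * grid c h f j)"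
  using assms by (simp add: delta_int_grid hweight_def grid_def add.commute)

theorem mainTheorem10:
  fixes a h b \<alpha> \<gamma> :: real and k :: nat and f g :: "real \<Rightarrow> real"
  assumes hpos: "h > 0" and k2: "k \<ge> 2" and bdef: "b = a + real k * h"
    and alpha: "0 < \<alpha>" "\<alpha> \<le> 1" and gdef: "\<gamma> = 1 - \<alpha>"
  shows "delta_int h a b (\<lambda>t. f t * left_frac_diff a h \<alpha> g t)
    = h powr \<gamma> * f (drho h b) * g b - h powr \<gamma> * f a * g a
      + delta_int h a (drho h b) (\<lambda>t. right_frac_diff (drho h b) h \<alpha> f t * g (dsigma h t))
      + \<gamma> / Gamma (\<gamma> + 1) * g a *
          (delta_int h a b (\<lambda>t. hfact h (t + \<gamma> * h - a) (\<gamma> - 1) * f t)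
           - delta_int h (dsigma h a) b (\<lambda>t. hfact h (t + \<gamma> * h - dsigma h a) (\<gamma> - 1) * f t))"
proof -
  obtain m where k: "k = Suc m" using k2 by (cases k) auto
  have b_grid: "b = a + real (Suc m) * h" and b_shift: "b = (a + h) + real m * h"
    and rho_b: "drho h b = a + real m * h" and sigma_a: "dsigma h a = a + h"
    using bdef k by (simp_all add: drho_def dsigma_def algebra_simps)
  have ends: "f (drho h b) = grid a h f m" "g b = grid a h g (Suc m)"
    "f a = grid a h f 0" "g a = grid a h g 0"
    unfolding grid_def rho_b by (simp_all add: b_grid)
  note lhs = delta_int_left_frac_diff[OF hpos gdef, of a "Suc m" f g, folded b_grid]
  note rhs = delta_int_right_frac_diff[OF hpos gdef, of a m f g, folded rho_b]
  note weights_a = delta_int_hweight[OF hpos, of a "Suc m" \<gamma> f, folded b_grid]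
  note weights_sigma_a = delta_int_hweight[OF hpos, of "a + h" m \<gamma> f, folded b_shift]
  show ?thesis
    unfolding sigma_a lhs rhs weights_a weights_sigma_a grid_shift ends
      frac_summation_by_parts summation_by_parts
    by (simp add: algebra_simps)
qed

end
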